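(* Let $\mathcal F$ be a convex cone of numerical functions on a set $Y$ and let $f_0\in\mathcal F$ with $0<f_0<\infty$. For every numerical function $\varphi\ge0$ on $Y$ let $F_\varphi:=\inf\{f\in\mathcal F: f\ge\varphi\}$. Then $F_{\varphi 1_{Y\setminus A}}=F_\varphi$ for every numerical function $\varphi\ge0$ on $Y$ and every $A\subset Y$ such that $\alpha\varphi\le F_\varphi\wedge(Mf_0)$ on $A$ for some $\alpha,M\in(1,\infty)$. *)

theory Defs
  imports "HOL-Analysis.Analysis"
begin

definition convex_cone :: "('a \<Rightarrow> ereal) set \<Rightarrow> bool" where
  "convex_cone \<F> \<longleftrightarrow>
     (\<forall>f\<in>\<F>. \<forall>g\<in>\<F>. (\<lambda>y. f y + g y) \<in> \<F>) \<and>
     (\<forall>f\<in>\<F>. \<forall>c::real. c \<ge> 0 \<longrightarrow> (\<lambda>y. ereal c * f y) \<in> \<F>)"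

definition red :: "('a \<Rightarrow> ereal) set \<Rightarrow> ('a \<Rightarrow> ereal) \<Rightarrow> 'a \<Rightarrow> ereal" where
  "red \<F> \<phi> y = Inf {f y | f. f \<in> \<F> \<and> (\<forall>z. \<phi> z \<le> f z)}"

end

theory Submission
  imports Defs
begin

text \<open>Let \<open>g \<in> \<F>\<close> majorize \<open>\<phi>\<close> off \<open>A\<close>. On \<open>A\<close> we have \<open>\<phi> \<le> M f\<^sub>0\<close>, so \<open>g + M f\<^sub>0\<close>
  is a majorant of \<open>\<phi>\<close> in \<open>\<F>\<close> and \<open>F\<^sub>\<phi> \<le> g + M f\<^sub>0\<close>. Whenever \<open>F\<^sub>\<phi> \<le> g + c f\<^sub>0\<close>,
  on \<open>A\<close> we get \<open>\<alpha>\<phi> \<le> F\<^sub>\<phi> \<le> g + c f\<^sub>0\<close>, so \<open>g + (c/\<alpha>) f\<^sub>0\<close> is again a majorant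
  of \<open>\<phi>\<close> (here \<open>g \<ge> 0\<close> is used). Iterating gives \<open>F\<^sub>\<phi> \<le> g + \<alpha>\<^sup>-\<^sup>n M f\<^sub>0\<close> for
  all \<open>n\<close>, and as \<open>f\<^sub>0\<close> is finite, \<open>F\<^sub>\<phi> \<le> g\<close>. The infimum over all such \<open>g\<close> gives
  \<open>F\<^sub>\<phi> \<le> F\<^sub>\<psi>\<close> for \<open>\<psi> = \<phi> 1\<^sub>Y\<^sub>\<setminus>\<^sub>A\<close>; the reverse inequality is monotonicity of reduction.\<close>

lemma red_le_majorant:
  assumes "g \<in> \<F>" "\<forall>z. \<phi> z \<le> g z"
  shows "red \<F> \<phi> y \<le> g y"
  unfolding red_def by (rule Inf_lower) (use assms in blast)

lemma red_ge_if_le_majorants: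
  assumes "\<And>g. g \<in> \<F> \<Longrightarrow> \<forall>z. \<phi> z \<le> g z \<Longrightarrow> x \<le> g y"
  shows "x \<le> red \<F> \<phi> y"
  unfolding red_def by (rule Inf_greatest) (use assms in blast)

lemma red_mono:
  assumes "\<And>z. \<phi> z \<le> \<psi> z"
  shows "red \<F> \<phi> y \<le> red \<F> \<psi> y"
  using assms order_trans by (blast intro: red_ge_if_le_majorants red_le_majorant)

lemma convex_cone_add_scaled:
  assumes "convex_cone \<F>" "f \<in> \<F>" "g \<in> \<F>" "0 \<le> c"
  shows "(\<lambda>y. f y + ereal c * g y) \<in> \<F>"
  using assms unfolding convex_cone_def by simp

lemma ereal_le_scaled_self:
  fixes x :: ereal
  assumes "0 \<le> x" "1 \<le> a"
  shows "x \<le> ereal a * x"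
  using assms by (cases x) (auto simp: mult_le_cancel_right1)

lemma ereal_le_add_scaled_div:
  fixes p r q :: ereal and \<alpha> c :: real
  assumes le: "ereal \<alpha> * p \<le> r + ereal c * q"
    and \<alpha>: "1 \<le> \<alpha>" and c: "0 \<le> c" and r: "0 \<le> r" and q: "0 \<le> q"
  shows "p \<le> r + ereal (c / \<alpha>) * q"
proof -
  have "ereal \<alpha> * p \<le> ereal \<alpha> * r + ereal c * q"
    using le ereal_le_scaled_self[OF r \<alpha>] by (simp add: add_right_mono order_trans)
  also have "\<dots> = ereal \<alpha> * (r + ereal (c / \<alpha>) * q)"
    using \<alpha> c r q by (simp add: ereal_right_distrib mult.assoc[symmetric])
  finally show ?thesis
    using \<alpha> by (simp add: ereal_mult_le_mult_iff)
qed

lemma ereal_le_of_le_add_geometric: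
  fixes x r :: ereal and b \<alpha> :: real
  assumes "1 < \<alpha>" and le: "\<And>n. x \<le> r + ereal (b / \<alpha> ^ n)"
  shows "x \<le> r"
proof (rule ereal_le_epsilon2)
  fix e :: real assume "0 < e"
  moreover have "(\<lambda>n. b / \<alpha> ^ n) \<longlonglongrightarrow> 0"
    using \<open>1 < \<alpha>\<close> by (rule LIMSEQ_divide_realpow_zero)
  ultimately obtain n where "b / \<alpha> ^ n < e"
    using order_tendstoD(2) eventually_sequentially by (metis order_refl)
  then show "x \<le> r + ereal e"
    using le[of n] by (meson add_left_mono ereal_less_eq(3) less_imp_le order_trans)
qed

lemma red_le_majorant_off_add_geometric:
  assumes cone: "convex_cone \<F>" and f\<^sub>0: "f\<^sub>0 \<in> \<F>" "\<And>z. 0 \<le> f\<^sub>0 z"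
    and \<alpha>: "1 \<le> \<alpha>" and M: "0 \<le> M"
    and red_on_A: "\<And>z. z \<in> A \<Longrightarrow> ereal \<alpha> * \<phi> z \<le> red \<F> \<phi> z"
    and bound_on_A: "\<And>z. z \<in> A \<Longrightarrow> \<phi> z \<le> ereal M * f\<^sub>0 z"
    and g: "g \<in> \<F>" "\<And>z. 0 \<le> g z" "\<And>z. z \<notin> A \<Longrightarrow> \<phi> z \<le> g z"
  shows "red \<F> \<phi> y \<le> g y + ereal (M / \<alpha> ^ n) * f\<^sub>0 y"
proof -
  have off_A: "\<phi> z \<le> g z + ereal c * f\<^sub>0 z" if "z \<notin> A" "0 \<le> c" for z c
    using g(3)[OF \<open>z \<notin> A\<close>] f\<^sub>0(2)[of z] \<open>0 \<le> c\<close> by (simp add: add_increasing2)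
  have majorant: "red \<F> \<phi> y \<le> g y + ereal c * f\<^sub>0 y"
    if "0 \<le> c" "\<And>z. z \<in> A \<Longrightarrow> \<phi> z \<le> g z + ereal c * f\<^sub>0 z" for c y
    using that off_A
    by (intro red_le_majorant convex_cone_add_scaled[OF cone g(1) f\<^sub>0(1)]) blast+
  show ?thesis
  proof (induction n arbitrary: y)
    case 0
    show ?case
      using bound_on_A g(2) M by (intro majorant) (auto intro: add_increasing)
  next
    case (Suc n)
    show ?case
    proof (intro majorant)
      fix z assume "z \<in> A"
      have "ereal \<alpha> * \<phi> z \<le> g z + ereal (M / \<alpha> ^ n) * f\<^sub>0 z"
        using red_on_A[OF \<open>z \<in> A\<close>] Suc.IH by (rule order_trans)
      then have "\<phi> z \<le> g z + ereal (M / \<alpha> ^ n / \<alpha>) * f\<^sub>0 z"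
        by (rule ereal_le_add_scaled_div) (use \<alpha> M g(2) f\<^sub>0(2) in auto)
      then show "\<phi> z \<le> g z + ereal (M / \<alpha> ^ Suc n) * f\<^sub>0 z"
        by (simp add: mult.commute)
    qed (use \<alpha> M in simp)
  qed
qed

lemma red_le_majorant_off:
  assumes cone: "convex_cone \<F>" and f\<^sub>0: "f\<^sub>0 \<in> \<F>" "\<And>z. 0 \<le> f\<^sub>0 z" "f\<^sub>0 y \<noteq> \<infinity>"
    and \<alpha>: "1 < \<alpha>" and M: "0 \<le> M"
    and red_on_A: "\<And>z. z \<in> A \<Longrightarrow> ereal \<alpha> * \<phi> z \<le> red \<F> \<phi> z"
    and bound_on_A: "\<And>z. z \<in> A \<Longrightarrow> \<phi> z \<le> ereal M * f\<^sub>0 z"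
    and g: "g \<in> \<F>" "\<And>z. 0 \<le> g z" "\<And>z. z \<notin> A \<Longrightarrow> \<phi> z \<le> g z"
  shows "red \<F> \<phi> y \<le> g y"
proof -
  obtain a where a: "f\<^sub>0 y = ereal a"
    using f\<^sub>0(2)[of y] f\<^sub>0(3) by (cases "f\<^sub>0 y") auto
  have "red \<F> \<phi> y \<le> g y + ereal (M * a / \<alpha> ^ n)" for n
    using red_le_majorant_off_add_geometric[OF cone f\<^sub>0(1,2) less_imp_le[OF \<alpha>] M
        red_on_A bound_on_A g, where y = y and n = n] a
    by simp
  then show ?thesis
    by (rule ereal_le_of_le_add_geometric[OF \<alpha>])
qed

theorem proposition3p3:
  fixes \<F> :: "('a \<Rightarrow> ereal) set" and f\<^sub>0 :: "'a \<Rightarrow> ereal"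
    and \<phi> :: "'a \<Rightarrow> ereal" and A :: "'a set"
  assumes cone: "convex_cone \<F>"
    and f0_in: "f\<^sub>0 \<in> \<F>"
    and f0_pos: "\<forall>y. 0 < f\<^sub>0 y \<and> f\<^sub>0 y < \<infinity>"
    and phi_nonneg: "\<forall>y. 0 \<le> \<phi> y"
    and hA: "\<exists>\<alpha> M :: real. 1 < \<alpha> \<and> 1 < M \<and>
               (\<forall>y\<in>A. ereal \<alpha> * \<phi> y \<le> min (red \<F> \<phi> y) (ereal M * f\<^sub>0 y))"
  shows "red \<F> (\<lambda>y. if y \<in> A then 0 else \<phi> y) = red \<F> \<phi>"
proof (rule ext, rule antisym)
  fix y
  show "red \<F> (\<lambda>y. if y \<in> A then 0 else \<phi> y) y \<le> red \<F> \<phi> y"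
    using phi_nonneg by (intro red_mono) simp
  obtain \<alpha> M :: real where \<alpha>: "1 < \<alpha>" and M: "1 < M"
    and red_on_A: "\<And>z. z \<in> A \<Longrightarrow> ereal \<alpha> * \<phi> z \<le> red \<F> \<phi> z"
    and scaled_bound_on_A: "\<And>z. z \<in> A \<Longrightarrow> ereal \<alpha> * \<phi> z \<le> ereal M * f\<^sub>0 z"
    using hA unfolding min.bounded_iff by blast
  have bound_on_A: "\<phi> z \<le> ereal M * f\<^sub>0 z" if "z \<in> A" for z
    using ereal_le_scaled_self[of "\<phi> z" \<alpha>] scaled_bound_on_A[OF that] phi_nonneg \<alpha>
    by (meson less_imp_le order_trans)
  have f0_nonneg: "0 \<le> f\<^sub>0 z" for z
    using f0_pos[rule_format, of z] by (simp add: less_imp_le)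
  show "red \<F> \<phi> y \<le> red \<F> (\<lambda>y. if y \<in> A then 0 else \<phi> y) y"
  proof (rule red_ge_if_le_majorants)
    fix g assume "g \<in> \<F>" and g: "\<forall>z. (if z \<in> A then 0 else \<phi> z) \<le> g z"
    then show "red \<F> \<phi> y \<le> g y"
      using phi_nonneg f0_pos M
      by (intro red_le_majorant_off[OF cone f0_in f0_nonneg _ \<alpha> _ red_on_A bound_on_A])
        (auto intro: order_trans split: if_splits dest: spec)
  qed
qed

end
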